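(* The operators $E(p;z)$ and $F(p;z)$ satisfy \[ E(p;z)E(p;w)=g_p(z/w)\,E(p;w)E(p;z),\qquad F(p;z)F(p;w)=g_p(z/w)^{-1}F(p;w)F(p;z). \] Consequently, for every $N\ge1$, the operator-valued functions \[ \prod_{1\le i<j\le N}\omega_p(x_i,x_j)^{-1}E(p;x_1)\cdots E(p;x_N)\quad\text{and}\quad\prod_{1\le i<j\le N}\omega'_p(x_i,x_j)^{-1}F(p;x_1)\cdots F(p;x_N) \] are symmetric in $x_1,\dots,x_N$.
   Context: Fix generic complex numbers $q,t,p$ with $|q|<1$ and $|p|<1$, and set $\gamma:=(qt^{-1})^{-1/2}$. Products and theta function: $(x;p)_\infty:=\prod_{n\ge0}(1-xp^n)$ and $\Theta_p(x):=(p;p)_\infty(x;p)_\infty(px^{-1};p)_\infty$. Structure and kernel functions: - $g_p(x):=\frac{\Theta_p(qx)\Theta_p(t^{-1}x)\Theta_p(q^{-1}tx)}{\Theta_p(q^{-1}x)\Theta_p(tx)\Theta_p(qt^{-1}x)}$; - $\omega_p(x,y):=\frac{\Theta_p(q^{-1}y/x)\Theta_p(ty/x)\Theta_p(qt^{-1}y/x)}{\Theta_p(y/x)^3}$; - $\omega'_p(x,y):=\frac{\Theta_p(qy/x)\Theta_p(t^{-1}y/x)\Theta_p(q^{-1}ty/x)}{\Theta_p(y/x)^3}$. Interpretation: relations between vertex operators $X(z)Y(w)=h(z/w)Y(w)X(z)$ mean the following. For each of the normally ordered components, both orderings equal scalar functions (expanded in $w/z$, resp. $z/w$) times the same normally ordered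 product, and the ratio of these functions, as meromorphic functions, is $h(z/w)$. Boson algebra: $\mathcal{B}_{a,b}$ is generated by $a_n,b_n$ ($n\ne0$) with relations - $[a_m,a_n]=m(1-p^{|m|})\frac{1-q^{|m|}}{1-t^{|m|}}\delta_{m+n,0}$, - $[b_m,b_n]=m\frac{1-p^{|m|}}{(qt^{-1}p)^{|m|}}\frac{1-q^{|m|}}{1-t^{|m|}}\delta_{m+n,0}$, - $[a_m,b_n]=0$. Zero modes: $a_0,Q$ satisfy $[a_0,Q]=1$ and commute with all $a_n,b_n$ ($n\ne0$). Normal ordering $:\ :$ puts positive-index modes to the right. Vertex operators: - $\eta(p;z):=\,:\exp(-\sum_{n\ne0}\frac{1-t^{-n}}{1-p^{|n|}}p^{|n|}b_n\frac{z^n}{n})\exp(-\sum_{n\ne0}\frac{1-t^{n}}{1-p^{|n|}}a_n\frac{z^{-n}}{n}):$, - $\xi(p;z):=\,:\exp(\sum_{n\ne0}\frac{1-t^{-n}}{1-p^{|n|}}\gamma^{-|n|}p^{|n|}b_n\frac{z^n}{n})\exp(\sum_{n\ne0}\frac{1-t^{n}}{1-p^{|n|}}\gamma^{|n|}a_n\frac{z^{-n}}{n}):$. The operators $(\eta)_\pm,(\xi)_\pm$ are the same exponentials (unordered), with the sums restricted to $\pm n>0$. Further: - $E(p;z):=\eta(p;z)-(\eta(p;z))_-(\eta(p;p^{-1}z))_+t^{-a_0}$; - $F(p;z):=\xi(p;z)-(\xi(p;z))_-(\xi(p;p^{-1}z))_+t^{a_0}$. *)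

theory Defs
  imports "HOL-Analysis.Analysis" "HOL-Library.Multiset"
begin

definition qpoch :: "complex \<Rightarrow> complex \<Rightarrow> complex" where
  "qpoch x p = (\<Prod>n. 1 - x * p ^ n)"

definition theta :: "complex \<Rightarrow> complex \<Rightarrow> complex" where
  "theta p x = qpoch p p * qpoch x p * qpoch (p / x) p"

definition gfun :: "complex \<Rightarrow> complex \<Rightarrow> complex \<Rightarrow> complex \<Rightarrow> complex" where
  "gfun p q t x =
     theta p (q * x) * theta p (x / t) * theta p (t * x / q) /
     (theta p (x / q) * theta p (t * x) * theta p (q * x / t))"

definition omega :: "complex \<Rightarrow> complex \<Rightarrow> complex \<Rightarrow> complex \<Rightarrow> complex \<Rightarrow> complex" where
  "omega p q t x y =
     theta p (y / (q * x)) * theta p (t * y / x) * theta p (q * y / (t * x)) / theta p (y / x) ^ 3"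

definition omega' :: "complex \<Rightarrow> complex \<Rightarrow> complex \<Rightarrow> complex \<Rightarrow> complex \<Rightarrow> complex" where
  "omega' p q t x y =
     theta p (q * y / x) * theta p (y / (t * x)) * theta p (t * y / (q * x)) / theta p (y / x) ^ 3"

definition gam :: "complex \<Rightarrow> complex \<Rightarrow> complex" where
  "gam q t = inverse (csqrt (q / t))"

section \<open>Boson commutators [a_k,a_{-k}], [b_k,b_{-k}] for k > 0\<close>

definition ka :: "complex \<Rightarrow> complex \<Rightarrow> complex \<Rightarrow> nat \<Rightarrow> complex" where
  "ka p q t k = of_nat k * (1 - p ^ k) * (1 - q ^ k) / (1 - t ^ k)"

definition kb :: "complex \<Rightarrow> complex \<Rightarrow> complex \<Rightarrow> nat \<Rightarrow> complex" where
  "kb p q t k = of_nat k * (1 - p ^ k) / (q / t * p) ^ k * (1 - q ^ k) / (1 - t ^ k)"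

text \<open>A normally ordered exponential :exp(sum_n alpha(n) a_n z^(-n) + sum_n beta(n) b_n z^n): is
  encoded by the pair (alpha, beta). The boolean selects the component of E (resp. F):
  False = eta(p;z) (resp. xi(p;z)); True = (eta(p;z))_- (eta(p;p^(-1)z))_+ t^(-a0)
  (resp. with xi and t^(a0)). Zero modes t^(+-a0) commute with all a_n, b_n (n /= 0)
  and do not contribute to contractions.\<close>

type_synonym mode_data = "(int \<Rightarrow> complex) \<times> (int \<Rightarrow> complex)"

definition etaA :: "complex \<Rightarrow> complex \<Rightarrow> bool \<Rightarrow> int \<Rightarrow> complex" where
  "etaA p t e n = (if e \<and> n > 0 then p powi n else 1) *
     (- (1 - t powi n) / ((1 - p ^ nat \<bar>n\<bar>) * of_int n))"

definition etaB :: "complex \<Rightarrow> complex \<Rightarrow> bool \<Rightarrow> int \<Rightarrow> complex" where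
  "etaB p t e n = (if e \<and> n > 0 then p powi (- n) else 1) *
     (- (1 - t powi (- n)) * p ^ nat \<bar>n\<bar> / ((1 - p ^ nat \<bar>n\<bar>) * of_int n))"

definition xiA :: "complex \<Rightarrow> complex \<Rightarrow> complex \<Rightarrow> bool \<Rightarrow> int \<Rightarrow> complex" where
  "xiA p q t e n = (if e \<and> n > 0 then p powi n else 1) *
     ((1 - t powi n) * gam q t ^ nat \<bar>n\<bar> / ((1 - p ^ nat \<bar>n\<bar>) * of_int n))"

definition xiB :: "complex \<Rightarrow> complex \<Rightarrow> complex \<Rightarrow> bool \<Rightarrow> int \<Rightarrow> complex" where
  "xiB p q t e n = (if e \<and> n > 0 then p powi (- n) else 1) *
     ((1 - t powi (- n)) * gam q t powi (- \<bar>n\<bar>) * p ^ nat \<bar>n\<bar> / ((1 - p ^ nat \<bar>n\<bar>) * of_int n))"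

definition Edata :: "complex \<Rightarrow> complex \<Rightarrow> bool \<Rightarrow> mode_data" where
  "Edata p t e = (etaA p t e, etaB p t e)"

definition Fdata :: "complex \<Rightarrow> complex \<Rightarrow> complex \<Rightarrow> bool \<Rightarrow> mode_data" where
  "Fdata p q t e = (xiA p q t e, xiB p q t e)"

section \<open>Contractions  :V(z): :W(w): = C(w/z) :V(z)W(w):\<close>

definition contrA :: "complex \<Rightarrow> complex \<Rightarrow> complex \<Rightarrow> mode_data \<Rightarrow> mode_data \<Rightarrow> complex \<Rightarrow> nat \<Rightarrow> complex" where
  "contrA p q t V W y n = fst V (int (Suc n)) * fst W (- int (Suc n)) * ka p q t (Suc n) * y ^ Suc n"

definition contrB :: "complex \<Rightarrow> complex \<Rightarrow> complex \<Rightarrow> mode_data \<Rightarrow> mode_data \<Rightarrow> complex \<Rightarrow> nat \<Rightarrow> complex" where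
  "contrB p q t V W y n = snd V (int (Suc n)) * snd W (- int (Suc n)) * kb p q t (Suc n) * inverse y ^ Suc n"

definition discrete_Cstar :: "complex set \<Rightarrow> bool" where
  "discrete_Cstar S \<longleftrightarrow> 0 \<notin> S \<and> (\<forall>x. x \<noteq> 0 \<longrightarrow> \<not> x islimpt S)"

definition meromorphic_Cstar :: "(complex \<Rightarrow> complex) \<Rightarrow> complex set \<Rightarrow> bool" where
  "meromorphic_Cstar f S \<longleftrightarrow> discrete_Cstar S \<and> f holomorphic_on (UNIV - insert 0 S) \<and>
     (\<forall>s\<in>S. \<exists>n::nat. \<exists>L. ((\<lambda>y. (y - s) ^ n * f y) \<longlongrightarrow> L) (at s))"

text \<open>f is the meromorphic function (on C^*) represented by the contraction of V(z)W(w),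
  expanded in y = w/z: each exponential factor converges (near 0, resp. near infinity)
  and continues meromorphically to C^*.\<close>

definition contraction_fun :: "complex \<Rightarrow> complex \<Rightarrow> complex \<Rightarrow> mode_data \<Rightarrow> mode_data \<Rightarrow> (complex \<Rightarrow> complex) \<Rightarrow> bool" where
  "contraction_fun p q t V W f \<longleftrightarrow>
     (\<exists>fA fB SA SB. meromorphic_Cstar fA SA \<and> meromorphic_Cstar fB SB \<and>
        (\<exists>r>0. \<forall>y. 0 < norm y \<and> norm y < r \<longrightarrow>
            summable (contrA p q t V W y) \<and> fA y = exp (suminf (contrA p q t V W y))) \<and>
        (\<exists>R. \<forall>y. R < norm y \<longrightarrow>
            summable (contrB p q t V W y) \<and> fB y = exp (suminf (contrB p q t V W y))) \<and>
        (\<forall>y. y \<noteq> 0 \<longrightarrow> f y = fA y * fB y))"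

text \<open>The operator-valued function  prod_{i<j} w(x_i,x_j)^(-1) X(x_1)...X(x_N)  with X = X_0 - X_1,
  written as a linear combination of normally ordered monomials :X_{e_1}(x_1)...X_{e_N}(x_N):
  (commutative), each monomial identified by the multiset of pairs (e_i, x_i); the value at M
  is the (meromorphically continued) scalar coefficient of that monomial.\<close>

definition opprod :: "(bool \<Rightarrow> bool \<Rightarrow> complex \<Rightarrow> complex) \<Rightarrow> (complex \<Rightarrow> complex \<Rightarrow> complex)
                      \<Rightarrow> complex list \<Rightarrow> (bool \<times> complex) multiset \<Rightarrow> complex" where
  "opprod f w xs M =
     (\<Sum>es\<in>{es. length es = length xs \<and> mset (zip es xs) = M}.
        (- 1) ^ length (filter id es) *
        (\<Prod>i<length xs. \<Prod>j\<in>{i<..<length xs}.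
            inverse (w (xs ! i) (xs ! j)) * f (es ! i) (es ! j) (xs ! j / xs ! i)))"

end

theory Submission
  imports Defs "HOL-Complex_Analysis.Complex_Analysis" "HOL-Combinatorics.Permutations"
begin

(* Every contraction of two modes of E is exp (sum_k c_k y^k) times the analogous series in 1/y, with
   c_k = -(1 - t^-k)(1 - q^k) / (k (1 - p^k)).  Expanding the logarithms of the factors of the
   q-Pochhammer symbols gives exp (sum_k c_k x^k) = (x;p)(qx/t;p) / ((x/t;p)(qx;p)), and the two
   halves combine into the theta ratio Theta(y) Theta(qy/t) / (Theta(y/t) Theta(qy)); it does not
   depend on the components of E because Theta(px) = -Theta(x)/x.  The modes of F are those of E
   rescaled by powers of gamma, which yields the same ratio with q and t interchanged.
   By Theta(1/x) = -Theta(x)/x, replacing y by 1/y multiplies the ratio by g_p(y) (by its inverse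
   for F), which are the exchange relations.  Divided by omega_p, the ratio at u = x_j/x_i becomes
   Theta(u)^4 / (Theta(u/q) Theta(tu) Theta(u/t) Theta(qu)), which is invariant under u -> 1/u;
   so every pair factor of the normalized N-fold product is symmetric, and the product is invariant
   under permutations of the x_i. *)

section \<open>The q-Pochhammer symbol\<close>

lemma power_neq_1_of_norm_less_1:
  fixes p :: complex assumes "norm p < 1" "n \<noteq> 0"
  shows "p ^ n \<noteq> 1"
proof
  assume "p ^ n = 1"
  then have "norm p ^ n = 1" by (metis norm_one norm_power)
  moreover have "norm p ^ n < 1" using assms by (simp add: power_less_one_iff)
  ultimately show False by simp
qed

lemma summable_qpoch_factors:
  fixes p x :: complex assumes "norm p < 1"
  shows "summable (\<lambda>n. norm ((1 - x * p ^ n) - 1))"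
proof -
  have "summable (\<lambda>n. norm x * norm p ^ n)"
    using assms by (intro summable_mult summable_geometric) auto
  then show ?thesis by (simp add: norm_mult norm_power)
qed

lemma convergent_prod_qpoch:
  fixes p x :: complex assumes "norm p < 1"
  shows "convergent_prod (\<lambda>n. 1 - x * p ^ n)"
  using summable_imp_abs_convergent_prod[OF summable_qpoch_factors[OF assms]]
  by (rule abs_convergent_prod_imp_convergent_prod)

lemma has_prod_qpoch:
  fixes p x :: complex assumes "norm p < 1"
  shows "(\<lambda>n. 1 - x * p ^ n) has_prod qpoch x p"
  unfolding qpoch_def using convergent_prod_qpoch[OF assms] by blast

lemma qpoch_eq_0_iff:
  fixes p x :: complex assumes "norm p < 1"
  shows "qpoch x p = 0 \<longleftrightarrow> (\<exists>n. x * p ^ n = 1)"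
proof -
  have "qpoch x p = 0 \<longleftrightarrow> (\<exists>n. 0 = 1 - x * p ^ n)"
    using has_prod_eq_0_iff[OF has_prod_qpoch[OF assms, of x]] by (simp add: image_iff)
  then show ?thesis by (metis eq_iff_diff_eq_0)
qed

lemma qpoch_0 [simp]: "qpoch 0 p = 1"
  by (simp add: qpoch_def)

lemma qpoch_shift:
  fixes p x :: complex assumes "norm p < 1"
  shows "qpoch x p = (1 - x) * qpoch (p * x) p"
proof (cases "x = 1")
  case True
  then have "qpoch x p = 0" using qpoch_eq_0_iff[OF assms, of x] by (metis mult_1_right power_0)
  with True show ?thesis by simp
next
  case False
  have "(\<Prod>n. 1 - x * p ^ Suc n) = qpoch x p / (1 - x)"
    using prodinf_split_head[OF convergent_prod_qpoch[OF assms]] False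
    unfolding qpoch_def by simp
  moreover have "(\<Prod>n. 1 - x * p ^ Suc n) = qpoch (p * x) p"
    unfolding qpoch_def by (simp add: mult_ac)
  ultimately have "qpoch (p * x) p = qpoch x p / (1 - x)" by simp
  then show ?thesis using False by simp
qed

lemma qpoch_nonzero:
  fixes p w :: complex assumes "norm p < 1" "norm w < 1"
  shows "qpoch w p \<noteq> 0"
proof
  assume "qpoch w p = 0"
  then obtain n where n: "w * p ^ n = 1" using qpoch_eq_0_iff[OF assms(1)] by blast
  have "norm (p ^ n) \<le> 1" using assms(1) by (simp add: norm_power power_le_one)
  then have "norm (w * p ^ n) < 1"
    using assms(2) mult_left_le[of "norm (p ^ n)" "norm w"] by (simp add: norm_mult)
  with n show False by simp
qed

lemma qpoch_p_nonzero:
  fixes p :: complex assumes "norm p < 1" "p \<noteq> 0"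
  shows "qpoch p p \<noteq> 0"
  using qpoch_eq_0_iff[OF assms(1), of p] power_neq_1_of_norm_less_1[OF assms(1), of "Suc _"]
  by (metis power_Suc nat.distinct(1))

lemma holomorphic_qpoch:
  fixes p :: complex assumes "norm p < 1"
  shows "(\<lambda>x. qpoch x p) holomorphic_on UNIV"
proof (rule holomorphic_uniform_sequence[where f = "\<lambda>n x. \<Prod>k<n. 1 - x * p ^ k"])
  fix z :: complex
  have "uniformly_convergent_on (cball z 1) (\<lambda>N x. \<Prod>n<N. 1 - x * p ^ n)"
  proof (rule uniformly_convergent_on_prod')
    show "uniformly_convergent_on (cball z 1) (\<lambda>N x. \<Sum>n<N. norm (1 - x * p ^ n - 1))"
    proof (rule Weierstrass_m_test'[where M = "\<lambda>n. (norm z + 1) * norm p ^ n"])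
      fix n x assume "x \<in> cball z (1::real)"
      then have "norm x \<le> norm z + 1"
        by (metis dist_norm mem_cball norm_triangle_sub add_le_cancel_left order_trans norm_minus_commute)
      then show "norm (norm (1 - x * p ^ n - 1)) \<le> (norm z + 1) * norm p ^ n"
        by (simp add: norm_mult norm_power mult_right_mono)
    next
      show "summable (\<lambda>n. (norm z + 1) * norm p ^ n)"
        using assms by (intro summable_mult summable_geometric) auto
    qed
    show "continuous_on (cball z 1) (\<lambda>x. 1 - x * p ^ n)" for n
      by (intro continuous_intros)
  qed simp
  then have "uniform_limit (cball z 1) (\<lambda>N x. \<Prod>n<N. 1 - x * p ^ n)
      (\<lambda>x. lim (\<lambda>N. \<Prod>n<N. 1 - x * p ^ n)) sequentially"
    using uniformly_convergent_uniform_limit_iff by blast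
  moreover have "lim (\<lambda>N. \<Prod>n<N. 1 - x * p ^ n) = qpoch x p" for x
    using has_prod_imp_tendsto'[OF has_prod_qpoch[OF assms, of x]] limI by blast
  ultimately have
    "uniform_limit (cball z 1) (\<lambda>N x. \<Prod>n<N. 1 - x * p ^ n) (\<lambda>x. qpoch x p) sequentially"
    by simp
  then show "\<exists>d>0. cball z d \<subseteq> UNIV \<and>
      uniform_limit (cball z d) (\<lambda>n x. \<Prod>k<n. 1 - x * p ^ k) (\<lambda>x. qpoch x p) sequentially"
    using zero_less_one subset_UNIV by blast
next
  show "(\<lambda>x. \<Prod>k<n. 1 - x * p ^ k) holomorphic_on UNIV" for n
    by (intro holomorphic_intros)
qed simp

lemma holomorphic_qpoch_compose [holomorphic_intros]:
  fixes p :: complex assumes "norm p < 1" and "f holomorphic_on S"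
  shows "(\<lambda>y. qpoch (f y) p) holomorphic_on S"
proof -
  have "((\<lambda>x. qpoch x p) \<circ> f) holomorphic_on S"
    by (rule holomorphic_on_compose_gen[OF assms(2) holomorphic_qpoch[OF assms(1)]]) simp
  then show ?thesis by (simp add: o_def)
qed

lemma isCont_qpoch_compose [continuous_intros]:
  fixes p :: complex assumes "norm p < 1" and "isCont f z"
  shows "isCont (\<lambda>y. qpoch (f y) p) z"
proof -
  have "isCont (\<lambda>x. qpoch x p) (f z)"
    using holomorphic_on_imp_continuous_on[OF holomorphic_qpoch[OF assms(1)]]
    by (simp add: continuous_on_eq_continuous_at)
  then show ?thesis using isCont_o2[OF assms(2)] by blast
qed

definition qratio :: "complex \<Rightarrow> complex \<Rightarrow> complex \<Rightarrow> complex \<Rightarrow> complex" where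
  "qratio p a b x = qpoch x p * qpoch (a * b * x) p / (qpoch (a * x) p * qpoch (b * x) p)"

text \<open>The Taylor coefficients of \<open>ln (qratio p a b x)\<close> at \<open>x = 0\<close>: expand each
  \<open>ln (1 - c x p\<^sup>n)\<close> and sum the geometric series over \<open>n\<close>.\<close>

definition qratio_coeff :: "complex \<Rightarrow> complex \<Rightarrow> complex \<Rightarrow> nat \<Rightarrow> complex" where
  "qratio_coeff p a b k = - (1 - a ^ k) * (1 - b ^ k) / (of_nat k * (1 - p ^ k))"

lemma norm_qratio_args_less_1:
  fixes a b x :: complex
  assumes x: "(1 + norm a) * (1 + norm b) * norm x < 1"
  shows "norm x < 1" "norm (a * x) < 1" "norm (b * x) < 1" "norm (a * b * x) < 1"
proof -
  have le: "norm w < 1" if "norm c \<le> (1 + norm a) * (1 + norm b)" "w = c * x" for c w :: complex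
    using x mult_right_mono[OF that(1) norm_ge_zero[of x]] that(2) by (simp add: norm_mult)
  show "norm x < 1" "norm (a * x) < 1" "norm (b * x) < 1" "norm (a * b * x) < 1"
    by (rule le; auto simp: algebra_simps norm_mult intro: add_increasing mult_nonneg_nonneg)+
qed

lemma qratio_nonzero:
  fixes p a b x :: complex assumes "norm p < 1"
    and "(1 + norm a) * (1 + norm b) * norm x < 1"
  shows "qratio p a b x \<noteq> 0"
  using norm_qratio_args_less_1[OF assms(2)] qpoch_nonzero[OF assms(1)] by (simp add: qratio_def)

lemma qratio_shift:
  fixes p a b x :: complex assumes p: "norm p < 1"
  shows "qratio p a b x = (1 - x) * (1 - a * b * x) / ((1 - a * x) * (1 - b * x)) * qratio p a b (p * x)"
proof -
  have shift: "qpoch (c * x) p = (1 - c * x) * qpoch (c * (p * x)) p" for c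
    using qpoch_shift[OF p, of "c * x"] by (simp add: mult.left_commute)
  show ?thesis
    using shift[of 1] shift[of "a * b"] shift[of a] shift[of b] unfolding qratio_def
    by (simp add: divide_inverse inverse_mult_distrib mult_ac)
qed

lemma norm_1_minus_power_le:
  fixes a :: complex
  shows "norm (1 - a ^ k) \<le> 2 * (1 + norm a) ^ k"
proof -
  have "norm (1 - a ^ k) \<le> 1 + norm a ^ k"
    using norm_triangle_ineq4[of 1 "a ^ k"] by (simp add: norm_power)
  moreover have "norm a ^ k \<le> (1 + norm a) ^ k" by (intro power_mono) auto
  moreover have "1 \<le> (1 + norm a) ^ k" by (intro one_le_power) auto
  ultimately show ?thesis by linarith
qed

lemma norm_qratio_coeff_le:
  fixes p a b x :: complex assumes p: "norm p < 1"
  shows "norm (qratio_coeff p a b k * x ^ k) \<le> 4 / (1 - norm p) * ((1 + norm a) * (1 + norm b) * norm x) ^ k"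
proof (cases "k = 0")
  case True then show ?thesis using p by (simp add: qratio_coeff_def)
next
  case False
  have "norm p ^ k \<le> norm p" using power_decreasing[of 1 k "norm p"] False p by simp
  then have "1 - norm p \<le> norm (1 - p ^ k)"
    using norm_triangle_ineq2[of 1 "p ^ k"] by (simp add: norm_power)
  also have "\<dots> \<le> of_nat k * norm (1 - p ^ k)"
    using False mult_right_mono[of 1 "of_nat k" "norm (1 - p ^ k)"] by simp
  finally have den: "1 - norm p \<le> of_nat k * norm (1 - p ^ k)" .
  have "norm (qratio_coeff p a b k * x ^ k) =
      norm (1 - a ^ k) * norm (1 - b ^ k) * norm x ^ k / (of_nat k * norm (1 - p ^ k))"
    by (simp add: qratio_coeff_def norm_mult norm_divide norm_power norm_minus_commute)
  also have "\<dots> \<le> (2 * (1 + norm a) ^ k) * (2 * (1 + norm b) ^ k) * norm x ^ k / (1 - norm p)"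
    using p den by (intro frac_le mult_mono norm_1_minus_power_le) auto
  also have "\<dots> = 4 / (1 - norm p) * ((1 + norm a) * (1 + norm b) * norm x) ^ k"
    by (simp add: power_mult_distrib)
  finally show ?thesis .
qed

lemma summable_qratio_series:
  fixes p a b x :: complex assumes p: "norm p < 1"
    and x: "(1 + norm a) * (1 + norm b) * norm x < 1"
  shows "summable (\<lambda>k. qratio_coeff p a b k * x ^ k)"
proof (rule summable_comparison_test[OF _ summable_mult[OF summable_geometric]])
  show "norm ((1 + norm a) * (1 + norm b) * norm x) < 1" using x by simp
qed (use norm_qratio_coeff_le[OF p] in blast)

lemma qratio_series_diff_sums:
  fixes p a b x :: complex assumes p: "norm p < 1"
    and x: "(1 + norm a) * (1 + norm b) * norm x < 1"
  shows "(\<lambda>k. qratio_coeff p a b k * x ^ k - qratio_coeff p a b k * (p * x) ^ k) sums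
           (ln (1 - x) - ln (1 - a * x) - ln (1 - b * x) + ln (1 - a * b * x))"
proof -
  have ln_sums: "(\<lambda>n. - (w ^ n) / of_nat n) sums ln (1 - w)" if "norm w < 1" for w :: complex
    using Ln_series'[of "- w"] that by simp
  note small = norm_qratio_args_less_1[OF x]
  have "(\<lambda>n. ((- (x ^ n) / of_nat n - - ((a * x) ^ n) / of_nat n) - - ((b * x) ^ n) / of_nat n)
              + - ((a * b * x) ^ n) / of_nat n) sums
           (ln (1 - x) - ln (1 - a * x) - ln (1 - b * x) + ln (1 - a * b * x))"
    by (intro sums_add sums_diff ln_sums small)
  moreover have "(- (x ^ n) / of_nat n - - ((a * x) ^ n) / of_nat n) - - ((b * x) ^ n) / of_nat n
      + - ((a * b * x) ^ n) / of_nat n = qratio_coeff p a b n * x ^ n - qratio_coeff p a b n * (p * x) ^ n" for n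
  proof (cases "n = 0")
    case False
    then have nz: "1 - p ^ n \<noteq> 0" "(of_nat n :: complex) \<noteq> 0"
      using power_neq_1_of_norm_less_1[OF p] by auto
    have "(- (x ^ n) / of_nat n - - ((a * x) ^ n) / of_nat n) - - ((b * x) ^ n) / of_nat n
        + - ((a * b * x) ^ n) / of_nat n = - (1 - a ^ n) * (1 - b ^ n) / of_nat n * x ^ n"
      using nz by (simp add: power_mult_distrib field_simps)
    also have "\<dots> = qratio_coeff p a b n * (1 - p ^ n) * x ^ n"
      using nz by (simp add: qratio_coeff_def)
    finally show ?thesis by (simp add: power_mult_distrib algebra_simps)
  qed (simp add: qratio_coeff_def)
  ultimately show ?thesis by simp
qed

lemma exp_qratio_series_shift:
  fixes p a b x :: complex assumes p: "norm p < 1"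
    and x: "(1 + norm a) * (1 + norm b) * norm x < 1"
  shows "exp (\<Sum>k. qratio_coeff p a b k * x ^ k) =
    (1 - x) * (1 - a * b * x) / ((1 - a * x) * (1 - b * x)) * exp (\<Sum>k. qratio_coeff p a b k * (p * x) ^ k)"
proof -
  have "norm (p * x) \<le> norm x" using p by (simp add: norm_mult mult_left_le_one_le)
  then have px: "(1 + norm a) * (1 + norm b) * norm (p * x) < 1"
    using x mult_left_mono[of "norm (p * x)" "norm x" "(1 + norm a) * (1 + norm b)"] by simp
  have "(\<lambda>k. qratio_coeff p a b k * x ^ k - qratio_coeff p a b k * (p * x) ^ k) sums
      ((\<Sum>k. qratio_coeff p a b k * x ^ k) - (\<Sum>k. qratio_coeff p a b k * (p * x) ^ k))"
    by (intro sums_diff summable_sums summable_qratio_series[OF p x] summable_qratio_series[OF p px])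
  note diff = sums_unique2[OF this qratio_series_diff_sums[OF p x]]
  have "1 - c \<noteq> 0" if "norm c < 1" for c :: complex
    using that by auto
  with norm_qratio_args_less_1[OF x] diff
  have "exp ((\<Sum>k. qratio_coeff p a b k * x ^ k) - (\<Sum>k. qratio_coeff p a b k * (p * x) ^ k)) =
      (1 - x) / (1 - a * x) / (1 - b * x) * (1 - a * b * x)"
    by (simp add: exp_add exp_diff)
  then show ?thesis by (simp add: exp_diff field_simps)
qed

lemma isCont_qratio_series:
  fixes p a b :: complex assumes p: "norm p < 1"
  shows "isCont (\<lambda>y. \<Sum>k. qratio_coeff p a b k * y ^ k) 0"
proof -
  define M where "M = (1 + norm a) * (1 + norm b)"
  have "M \<ge> 1" unfolding M_def by (auto simp: algebra_simps intro: add_increasing)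
  define K where "K = complex_of_real (1 / (2 * M))"
  have "norm K = 1 / (2 * M)" unfolding K_def norm_of_real using \<open>M \<ge> 1\<close> by simp
  then have "summable (\<lambda>k. qratio_coeff p a b k * K ^ k)" and "norm 0 < norm K"
    using \<open>M \<ge> 1\<close> by (auto intro!: summable_qratio_series[OF p] simp: M_def[symmetric])
  then show ?thesis by (rule isCont_powser)
qed

text \<open>Both sides satisfy the same first-order p-difference equation (\<open>qratio_shift\<close>,
  \<open>exp_qratio_series_shift\<close>), so their quotient is invariant under \<open>x \<mapsto> p x\<close>; being
  continuous at \<open>0\<close>, where it equals \<open>1\<close>, it is constant.\<close>

lemma exp_qratio_series:
  fixes p a b x :: complex assumes p: "norm p < 1"
    and x: "(1 + norm a) * (1 + norm b) * norm x < 1"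
  shows "exp (\<Sum>k. qratio_coeff p a b k * x ^ k) = qratio p a b x"
proof -
  define M where "M = (1 + norm a) * (1 + norm b)"
  have M1: "1 \<le> M" unfolding M_def by (auto simp: algebra_simps intro: add_increasing)
  define S where "S y = (\<Sum>k. qratio_coeff p a b k * y ^ k)" for y
  define u where "u y = exp (S y) / qratio p a b y" for y
  have u_shift: "u y = u (p * y)" if y: "M * norm y < 1" for y
  proof -
    have y': "(1 + norm a) * (1 + norm b) * norm y < 1" using y unfolding M_def .
    have "(1 - y) * (1 - a * b * y) / ((1 - a * y) * (1 - b * y)) \<noteq> 0"
      using norm_qratio_args_less_1[OF y'] by (auto simp: right_minus_eq)
    then show ?thesis
      unfolding u_def S_def exp_qratio_series_shift[OF p y'] qratio_shift[OF p, of a b y] by simp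
  qed
  have u_orbit: "u (p ^ n * x) = u x" for n
  proof (induction n)
    case (Suc n)
    have "norm (p ^ n * x) \<le> norm x"
      using p by (simp add: norm_mult norm_power mult_left_le_one_le power_le_one)
    then have "M * norm (p ^ n * x) < 1"
      using x M1 mult_left_mono[of "norm (p ^ n * x)" "norm x" M] unfolding M_def by linarith
    then show ?case using u_shift Suc by (simp add: mult.assoc)
  qed simp
  have "isCont S 0"
    unfolding S_def[abs_def] by (rule isCont_qratio_series[OF p])
  moreover have "S 0 = 0" unfolding S_def powser_zero by (simp add: qratio_coeff_def)
  moreover have qratio_0: "qratio p a b 0 = 1" by (simp add: qratio_def)
  moreover have "isCont (qratio p a b) 0"
    unfolding qratio_def[abs_def] using qratio_0
    by (intro continuous_intros p) (auto simp: qratio_def)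
  ultimately have "isCont u 0" and u0: "u 0 = 1"
    unfolding u_def[abs_def] by (auto intro!: continuous_intros)
  moreover have "(\<lambda>n. p ^ n * x) \<longlonglongrightarrow> 0"
    using tendsto_mult[OF LIMSEQ_power_zero[OF p] tendsto_const[of x]] by simp
  ultimately have "(\<lambda>n. u (p ^ n * x)) \<longlonglongrightarrow> 1"
    using isCont_tendsto_compose by fastforce
  then have "u x = 1" unfolding u_orbit by (simp add: LIMSEQ_const_iff)
  then show ?thesis using qratio_nonzero[OF p x] unfolding u_def S_def by simp
qed

lemma exp_qratio_series_Suc:
  fixes p a b x :: complex assumes p: "norm p < 1"
    and x: "(1 + norm a) * (1 + norm b) * norm x < 1"
  shows "summable (\<lambda>n. qratio_coeff p a b (Suc n) * x ^ Suc n)"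
    and "exp (\<Sum>n. qratio_coeff p a b (Suc n) * x ^ Suc n) = qratio p a b x"
proof -
  have sm: "summable (\<lambda>k. qratio_coeff p a b k * x ^ k)" by (rule summable_qratio_series[OF p x])
  then show "summable (\<lambda>n. qratio_coeff p a b (Suc n) * x ^ Suc n)"
    by (subst summable_Suc_iff)
  have "(\<Sum>n. qratio_coeff p a b (Suc n) * x ^ Suc n) = (\<Sum>k. qratio_coeff p a b k * x ^ k)"
    using suminf_split_head[OF sm] by (simp add: qratio_coeff_def)
  then show "exp (\<Sum>n. qratio_coeff p a b (Suc n) * x ^ Suc n) = qratio p a b x"
    using exp_qratio_series[OF p x] by simp
qed

section \<open>The theta function\<close>

definition geom_orbit :: "complex \<Rightarrow> complex \<Rightarrow> complex set" where
  "geom_orbit p c = range (\<lambda>k::int. c * p powi k)"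

lemma theta_mult_p:
  fixes p x :: complex assumes p: "norm p < 1" "p \<noteq> 0" and x: "x \<noteq> 0"
  shows "theta p (p * x) = - theta p x / x"
proof (cases "x = 1")
  case True
  have "qpoch 1 p = 0" using qpoch_shift[OF p(1), of 1] by simp
  then show ?thesis using True p(2) by (simp add: theta_def)
next
  case False
  have e1: "qpoch (p * x) p = qpoch x p / (1 - x)" using qpoch_shift[OF p(1), of x] False by simp
  have e2: "qpoch (inverse x) p = (1 - inverse x) * qpoch (p / x) p"
    using qpoch_shift[OF p(1), of "inverse x"] by (simp only: divide_inverse)
  have e3: "p / (p * x) = inverse x" using p(2) x by (simp add: field_simps)
  have "theta p (p * x) = theta p x * ((1 - inverse x) / (1 - x))"
    unfolding theta_def e1 e2 e3 by (simp only: divide_inverse mult_ac)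
  also have "(1 - inverse x) / (1 - x) = - 1 / x" using x False by (simp add: field_simps)
  finally show ?thesis by simp
qed

lemma theta_inverse:
  fixes p x :: complex assumes p: "norm p < 1" "p \<noteq> 0" and x: "x \<noteq> 0"
  shows "theta p (inverse x) = - theta p x / x"
proof -
  have "p / inverse x = p * x" "p / (p * x) = inverse x"
    using p(2) x by (simp_all add: field_simps)
  then have "theta p (inverse x) = theta p (p * x)"
    unfolding theta_def by (simp only: mult_ac)
  then show ?thesis using theta_mult_p[OF p x] by simp
qed

lemma theta_nonzero:
  fixes p x :: complex assumes p: "norm p < 1" "p \<noteq> 0" and x: "x \<notin> geom_orbit p 1"
  shows "theta p x \<noteq> 0"
proof -
  have "qpoch x p \<noteq> 0"
  proof
    assume "qpoch x p = 0"
    then obtain n where "x * p ^ n = 1" using qpoch_eq_0_iff[OF p(1)] by blast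
    then have "x = 1 * p powi (- int n)" using p(2) by (simp add: power_int_minus field_simps)
    then show False using x unfolding geom_orbit_def by blast
  qed
  moreover have "qpoch (p / x) p \<noteq> 0"
  proof
    assume "qpoch (p / x) p = 0"
    then obtain n where n: "p / x * p ^ n = 1" using qpoch_eq_0_iff[OF p(1)] by blast
    then have "x = p ^ Suc n" by (cases "x = 0") (simp_all add: field_simps)
    then have "x = 1 * p powi int (Suc n)" by (metis power_int_of_nat mult_1)
    then show False using x unfolding geom_orbit_def by blast
  qed
  ultimately show ?thesis using qpoch_p_nonzero[OF p] by (simp add: theta_def)
qed

lemma theta_scaled_nonzero:
  fixes p c u :: complex assumes p: "norm p < 1" "p \<noteq> 0" and c: "c \<noteq> 0"
    and u: "u \<notin> geom_orbit p (inverse c)"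
  shows "theta p (c * u) \<noteq> 0"
proof (rule theta_nonzero[OF p], rule notI)
  assume "c * u \<in> geom_orbit p 1"
  then obtain k where "c * u = 1 * p powi k" unfolding geom_orbit_def by blast
  then have "u = inverse c * p powi k" using c by (simp add: field_simps)
  then show False using u unfolding geom_orbit_def by blast
qed

lemma finite_power_int_band:
  fixes a m M :: real assumes a: "0 < a" "a < 1" and m: "0 < m"
  shows "finite {k::int. m < a powi k \<and> a powi k < M}"
proof (cases "M > 0")
  case False
  then have "{k::int. m < a powi k \<and> a powi k < M} = {}" using m by force
  then show ?thesis by (metis finite.emptyI)
next
  case True
  obtain N where N: "a ^ N < m" using real_arch_pow_inv[OF m a(2)] by blast
  obtain N' where N': "a ^ N' < 1 / M" using real_arch_pow_inv[of "1 / M" a] True a by auto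
  have "{k::int. m < a powi k \<and> a powi k < M} \<subseteq> {- int N' .. int N}"
  proof (intro subsetI, elim CollectE conjE)
    fix k :: int assume k: "m < a powi k" "a powi k < M"
    show "k \<in> {- int N' .. int N}"
    proof (cases "k \<ge> 0")
      case True
      then have "m < a ^ nat k" using k(1) by (simp add: power_int_def)
      then have "nat k < N" using N power_strict_decreasing_iff[OF a, of N "nat k"] by linarith
      then show ?thesis using True by simp
    next
      case False
      then have "inverse (a ^ nat (- k)) < M" using k(2) by (simp add: power_int_def power_inverse)
      then have "1 / M < a ^ nat (- k)" using True a
        by (metis divide_less_eq inverse_eq_divide inverse_less_imp_less mult.commute
            nonzero_mult_div_cancel_left zero_less_power less_irrefl)
      then have "nat (- k) < N'" using N' power_strict_decreasing_iff[OF a, of N' "nat (- k)"] by linarith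
      then show ?thesis using False by simp
    qed
  qed
  then show ?thesis by (rule finite_subset) simp
qed

text \<open>Near \<open>x \<noteq> 0\<close>, only the finitely many orbit points with
  \<open>\<bar>x\<bar>/2 < \<bar>c p\<^sup>k\<bar> < 2\<bar>x\<bar>\<close> occur.\<close>

lemma discrete_Cstar_geom_orbit:
  fixes p c :: complex assumes p: "norm p < 1" "p \<noteq> 0" and c: "c \<noteq> 0"
  shows "discrete_Cstar (geom_orbit p c)"
  unfolding discrete_Cstar_def
proof (intro conjI allI impI)
  show "0 \<notin> geom_orbit p c" using p c unfolding geom_orbit_def by auto
next
  fix x :: complex assume x: "x \<noteq> 0"
  define U where "U = {z::complex. norm x / 2 < norm z \<and> norm z < 2 * norm x}"
  have "open U" unfolding U_def by (intro open_Collect_conj open_Collect_less continuous_intros)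
  have "x \<in> U" using x unfolding U_def by simp
  define K where "K = {k::int. norm x / (2 * norm c) < norm p powi k \<and> norm p powi k < 2 * norm x / norm c}"
  have "finite K" unfolding K_def by (rule finite_power_int_band) (use p c x in auto)
  moreover have "geom_orbit p c \<inter> U \<subseteq> (\<lambda>k. c * p powi k) ` K"
  proof
    fix z assume "z \<in> geom_orbit p c \<inter> U"
    then obtain k where z: "z = c * p powi k" and "z \<in> U" unfolding geom_orbit_def by blast
    then have "norm x / 2 < norm c * norm p powi k" "norm c * norm p powi k < 2 * norm x"
      unfolding U_def by (auto simp: norm_mult norm_power_int)
    then have "k \<in> K" unfolding K_def using c by (simp add: field_simps)
    then show "z \<in> (\<lambda>k. c * p powi k) ` K" using z by blast
  qed
  ultimately have "finite (geom_orbit p c \<inter> U)" by (meson finite_imageI finite_subset)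
  then have "\<not> x islimpt (geom_orbit p c \<inter> U)" by (rule islimpt_finite)
  moreover have "\<not> x islimpt (- U)"
    using \<open>open U\<close> \<open>x \<in> U\<close> closed_limpt[of "- U"] by (auto simp: closed_Compl)
  moreover have "geom_orbit p c \<subseteq> (geom_orbit p c \<inter> U) \<union> - U" by blast
  ultimately show "\<not> x islimpt geom_orbit p c"
    by (metis islimpt_Un islimpt_subset)
qed

lemma discrete_Cstar_Un:
  "discrete_Cstar A \<Longrightarrow> discrete_Cstar B \<Longrightarrow> discrete_Cstar (A \<union> B)"
  unfolding discrete_Cstar_def by (auto simp: islimpt_Un)

lemma holomorphic_quotient_pole_order:
  fixes N D :: "complex \<Rightarrow> complex"
  assumes N: "N holomorphic_on U" and D: "D holomorphic_on U" and U: "open U" "connected U"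
    and s: "s \<in> U" and w: "w \<in> U" "D w \<noteq> 0"
  shows "\<exists>n L. ((\<lambda>y. (y - s) ^ n * (N y / D y)) \<longlongrightarrow> L) (at s)"
proof -
  have cN: "isCont N s" and cD: "isCont D s"
    using holomorphic_on_imp_continuous_on[OF N] holomorphic_on_imp_continuous_on[OF D] U(1) s
    by (auto simp: continuous_on_eq_continuous_at)
  show ?thesis
  proof (cases "D s = 0")
    case False
    then have "((\<lambda>y. (y - s) ^ 0 * (N y / D y)) \<longlongrightarrow> (s - s) ^ 0 * (N s / D s)) (at s)"
      using cN cD by (auto simp: isCont_def intro!: tendsto_intros)
    then show ?thesis by blast
  next
    case True
    have "\<not> D constant_on U"
      using True s w unfolding constant_on_def by metis
    then obtain g r n where r: "0 < r" "ball s r \<subseteq> U" and g: "g holomorphic_on ball s r"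
      and fac: "\<And>w. w \<in> ball s r \<Longrightarrow> D w = (w - s) ^ n * g w"
      and gnz: "\<And>w. w \<in> ball s r \<Longrightarrow> g w \<noteq> 0"
      using holomorphic_factor_zero_nonconstant[OF D U s True] by metis
    have "isCont g s"
      using holomorphic_on_imp_continuous_on[OF g] r by (auto simp: continuous_on_eq_continuous_at)
    then have lim: "((\<lambda>y. N y / g y) \<longlongrightarrow> N s / g s) (at s)"
      using cN gnz r by (intro tendsto_divide) (auto simp: isCont_def)
    have "((\<lambda>y. (y - s) ^ n * (N y / D y)) \<longlongrightarrow> N s / g s) (at s)"
    proof (rule Lim_transform_within_open[OF lim open_ball[of s r]])
      fix x assume x: "x \<in> ball s r" "x \<noteq> s"
      then show "N x / g x = (x - s) ^ n * (N x / D x)"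
        using fac[OF x(1)] gnz[OF x(1)] by (simp add: field_simps)
    qed (use r in simp)
    then show ?thesis by blast
  qed
qed

lemma meromorphic_Cstar_qratio_compose:
  fixes p a b :: complex and h :: "complex \<Rightarrow> complex"
  assumes p: "norm p < 1" and h: "h holomorphic_on - {0}" and S: "discrete_Cstar S"
    and den: "\<And>y. y \<noteq> 0 \<Longrightarrow> y \<notin> S \<Longrightarrow> qpoch (a * h y) p * qpoch (b * h y) p \<noteq> 0"
    and w: "w \<noteq> 0" "(1 + norm a) * (1 + norm b) * norm (h w) < 1"
  shows "meromorphic_Cstar (\<lambda>y. qratio p a b (h y)) S"
  unfolding meromorphic_Cstar_def
proof (intro conjI ballI S)
  have hol: "(\<lambda>y. qpoch (c * h y) p) holomorphic_on - {0}" for c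
    by (intro holomorphic_intros p h)
  have eq: "qratio p a b (h y) =
      qpoch (1 * h y) p * qpoch ((a * b) * h y) p / (qpoch (a * h y) p * qpoch (b * h y) p)" for y
    by (simp add: qratio_def)
  show "(\<lambda>y. qratio p a b (h y)) holomorphic_on UNIV - insert 0 S"
    unfolding eq
    by (intro holomorphic_intros holomorphic_on_subset[OF hol]) (use den in auto)
  fix s assume "s \<in> S"
  then have "s \<in> - {0}" using S unfolding discrete_Cstar_def by auto
  moreover have "qpoch (a * h w) p * qpoch (b * h w) p \<noteq> 0"
    using norm_qratio_args_less_1[OF w(2)] qpoch_nonzero[OF p] by (simp add: mult.assoc)
  ultimately show "\<exists>n L. ((\<lambda>y. (y - s) ^ n * qratio p a b (h y)) \<longlongrightarrow> L) (at s)"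
    unfolding eq using w(1)
    by (intro holomorphic_quotient_pole_order[where U = "- {0}"] holomorphic_intros hol)
      (auto intro: connected_punctured_universe)
qed

lemma qpoch_scaled_eq_0_imp_orbit:
  fixes p c y :: complex assumes p: "norm p < 1" "p \<noteq> 0" and c: "c \<noteq> 0"
    and z: "qpoch (c * y) p = 0"
  shows "y \<in> geom_orbit p (inverse c)"
proof -
  obtain n where "c * y * p ^ n = 1" using z qpoch_eq_0_iff[OF p(1)] by blast
  then have "y = inverse c * p powi (- int n)" using p c by (simp add: power_int_minus field_simps)
  then show ?thesis unfolding geom_orbit_def by blast
qed

lemma qpoch_scaled_inverse_eq_0_imp_orbit:
  fixes p c y :: complex assumes p: "norm p < 1" and z: "qpoch (c * inverse y) p = 0"
  shows "y \<in> geom_orbit p c"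
proof -
  obtain n where n: "c * inverse y * p ^ n = 1" using z qpoch_eq_0_iff[OF p] by blast
  then have "y = c * p powi int n" by (cases "y = 0") (simp_all add: field_simps)
  then show ?thesis unfolding geom_orbit_def by blast
qed

lemma meromorphic_Cstar_qratio_scaled:
  fixes p a b c :: complex assumes p: "norm p < 1" "p \<noteq> 0" and abc: "a \<noteq> 0" "b \<noteq> 0" "c \<noteq> 0"
  shows "meromorphic_Cstar (\<lambda>y. qratio p a b (c * y))
           (geom_orbit p (inverse (a * c)) \<union> geom_orbit p (inverse (b * c)))"
proof (rule meromorphic_Cstar_qratio_compose[OF p(1)])
  define M where "M = (1 + norm a) * (1 + norm b)"
  have "M > 0" unfolding M_def by (simp add: add_pos_nonneg)
  define w where "w = complex_of_real (1 / (2 * M * norm c))"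
  show "w \<noteq> 0" using \<open>M > 0\<close> abc unfolding w_def by simp
  have "norm w = 1 / (2 * M * norm c)" unfolding w_def norm_of_real using \<open>M > 0\<close> abc by simp
  then have "M * norm (c * w) = 1 / 2" using \<open>M > 0\<close> abc by (simp add: norm_mult)
  then show "(1 + norm a) * (1 + norm b) * norm (c * w) < 1" unfolding M_def by simp
  show "qpoch (a * (c * y)) p * qpoch (b * (c * y)) p \<noteq> 0"
    if "y \<notin> geom_orbit p (inverse (a * c)) \<union> geom_orbit p (inverse (b * c))" for y
    using that qpoch_scaled_eq_0_imp_orbit[OF p, of "a * c" y] qpoch_scaled_eq_0_imp_orbit[OF p, of "b * c" y] abc
    by (auto simp: mult.assoc)
qed (use p abc in \<open>auto intro!: holomorphic_intros discrete_Cstar_Un discrete_Cstar_geom_orbit\<close>)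

lemma meromorphic_Cstar_qratio_inverse:
  fixes p a b c :: complex assumes p: "norm p < 1" "p \<noteq> 0" and abc: "a \<noteq> 0" "b \<noteq> 0" "c \<noteq> 0"
  shows "meromorphic_Cstar (\<lambda>y. qratio p a b (c * inverse y))
           (geom_orbit p (a * c) \<union> geom_orbit p (b * c))"
proof (rule meromorphic_Cstar_qratio_compose[OF p(1)])
  define M where "M = (1 + norm a) * (1 + norm b)"
  have "M > 0" unfolding M_def by (simp add: add_pos_nonneg)
  define w where "w = complex_of_real (2 * M * norm c)"
  show "w \<noteq> 0" using \<open>M > 0\<close> abc unfolding w_def by simp
  have "norm w = 2 * M * norm c" unfolding w_def norm_of_real using \<open>M > 0\<close> abc by simp
  then have "M * norm (c * inverse w) = M * (norm c * inverse (2 * M * norm c))"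
    by (simp only: norm_mult norm_inverse)
  also have "\<dots> = 1 / 2" using \<open>M > 0\<close> abc by (simp add: field_simps)
  finally show "(1 + norm a) * (1 + norm b) * norm (c * inverse w) < 1" unfolding M_def by simp
  show "qpoch (a * (c * inverse y)) p * qpoch (b * (c * inverse y)) p \<noteq> 0"
    if "y \<notin> geom_orbit p (a * c) \<union> geom_orbit p (b * c)" for y
    using that qpoch_scaled_inverse_eq_0_imp_orbit[OF p(1), of "a * c" y]
      qpoch_scaled_inverse_eq_0_imp_orbit[OF p(1), of "b * c" y]
    by (auto simp: mult.assoc)
qed (use p abc in \<open>auto intro!: holomorphic_intros discrete_Cstar_Un discrete_Cstar_geom_orbit\<close>)

lemma contraction_fun_qratio:
  fixes p q t a b cA cB :: complex
  assumes p: "norm p < 1" "p \<noteq> 0" and ab: "a \<noteq> 0" "b \<noteq> 0" and c: "cA \<noteq> 0" "cB \<noteq> 0"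
    and contrA: "\<And>y n. contrA p q t V W y n = qratio_coeff p a b (Suc n) * (cA * y) ^ Suc n"
    and contrB: "\<And>y n. contrB p q t V W y n = qratio_coeff p a b (Suc n) * (cB * inverse y) ^ Suc n"
  shows "contraction_fun p q t V W (\<lambda>y. qratio p a b (cA * y) * qratio p a b (cB * inverse y))"
proof -
  define M where "M = (1 + norm a) * (1 + norm b)"
  have "M > 0" unfolding M_def by (simp add: add_pos_nonneg)
  have contrA_fun: "contrA p q t V W y = (\<lambda>n. qratio_coeff p a b (Suc n) * (cA * y) ^ Suc n)" for y
    using contrA by blast
  have contrB_fun: "contrB p q t V W y = (\<lambda>n. qratio_coeff p a b (Suc n) * (cB * inverse y) ^ Suc n)" for y
    using contrB by blast
  have A: "summable (contrA p q t V W y) \<and> qratio p a b (cA * y) = exp (suminf (contrA p q t V W y))"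
    if "norm y < 1 / (M * norm cA)" for y
  proof -
    have "M * norm (cA * y) < 1"
      using that \<open>M > 0\<close> c by (simp add: norm_mult field_simps)
    then show ?thesis using exp_qratio_series_Suc[OF p(1)] unfolding M_def contrA_fun by simp
  qed
  have B: "summable (contrB p q t V W y) \<and> qratio p a b (cB * inverse y) = exp (suminf (contrB p q t V W y))"
    if "M * norm cB < norm y" for y
  proof -
    have "norm y > 0" using that \<open>M > 0\<close> by (smt (verit) mult_nonneg_nonneg norm_ge_zero)
    have "M * norm (cB * inverse y) = M * norm cB / norm y"
      by (simp add: norm_mult norm_inverse divide_inverse)
    with that \<open>norm y > 0\<close> have "M * norm (cB * inverse y) < 1" by simp
    then show ?thesis using exp_qratio_series_Suc[OF p(1)] unfolding M_def contrB_fun by simp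
  qed
  have "1 / (M * norm cA) > 0" using \<open>M > 0\<close> c by simp
  show ?thesis
    unfolding contraction_fun_def
  proof (rule exI[of _ "\<lambda>y. qratio p a b (cA * y)"], rule exI[of _ "\<lambda>y. qratio p a b (cB * inverse y)"],
      rule exI, rule exI, intro conjI)
    show "meromorphic_Cstar (\<lambda>y. qratio p a b (cA * y))
        (geom_orbit p (inverse (a * cA)) \<union> geom_orbit p (inverse (b * cA)))"
      by (rule meromorphic_Cstar_qratio_scaled[OF p ab c(1)])
    show "meromorphic_Cstar (\<lambda>y. qratio p a b (cB * inverse y))
        (geom_orbit p (a * cB) \<union> geom_orbit p (b * cB))"
      by (rule meromorphic_Cstar_qratio_inverse[OF p ab c(2)])
  qed (use A B \<open>1 / (M * norm cA) > 0\<close> in blast)+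
qed

section \<open>Contractions of the modes of E and F\<close>

lemma etaA_pos:
  "k > 0 \<Longrightarrow> etaA p t e (int k) = (if e then p ^ k else 1) * (- (1 - t ^ k) / ((1 - p ^ k) * of_nat k))"
  by (simp add: etaA_def)

lemma etaA_neg:
  "k > 0 \<Longrightarrow> etaA p t e (- int k) = (1 - inverse t ^ k) / ((1 - p ^ k) * of_nat k)"
  by (simp add: etaA_def power_int_minus power_inverse) (metis minus_diff_eq minus_divide_left)

lemma etaB_pos:
  "k > 0 \<Longrightarrow> etaB p t e (int k) =
    (if e then inverse p ^ k else 1) * (- (1 - inverse t ^ k) * p ^ k / ((1 - p ^ k) * of_nat k))"
  by (simp add: etaB_def power_int_minus power_inverse)

lemma etaB_neg:
  "k > 0 \<Longrightarrow> etaB p t e (- int k) = (1 - t ^ k) * p ^ k / ((1 - p ^ k) * of_nat k)"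
  by (simp add: etaB_def) (metis minus_diff_eq minus_divide_left minus_mult_left)

lemma xiA_eq_etaA: "xiA p q t e n = - (gam q t ^ nat \<bar>n\<bar>) * etaA p t e n"
  unfolding xiA_def etaA_def by (simp add: divide_inverse algebra_simps)

lemma xiB_eq_etaB: "xiB p q t e n = - (gam q t powi (- \<bar>n\<bar>)) * etaB p t e n"
  unfolding xiB_def etaB_def by (simp add: divide_inverse algebra_simps)

lemma gam_squared:
  assumes "q \<noteq> 0" "t \<noteq> 0"
  shows "gam q t * gam q t = t / q"
proof -
  have "csqrt (q / t) * csqrt (q / t) = q / t" using power2_csqrt[of "q / t"] by (simp add: power2_eq_square)
  then show ?thesis unfolding gam_def by (simp add: inverse_mult_distrib[symmetric])
qed

lemma contrA_Edata:
  fixes p q t y :: complex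
  assumes p: "norm p < 1" and t: "\<forall>k::nat. k > 0 \<longrightarrow> t ^ k \<noteq> 1"
  shows "contrA p q t (Edata p t i) (Edata p t j) y n =
    qratio_coeff p (inverse t) q (Suc n) * ((if i then p else 1) * y) ^ Suc n"
proof -
  \<comment> \<open>Naming the powers as atoms keeps \<open>field_simps\<close> from expanding them.\<close>
  define K D E Ti Q Y L where "K = (of_nat (Suc n) :: complex)" and "D = 1 - p ^ Suc n"
    and "E = 1 - t ^ Suc n" and "Ti = inverse t ^ Suc n" and "Q = q ^ Suc n" and "Y = y ^ Suc n"
    and "L = (if i then p ^ Suc n else 1)"
  have nz: "K \<noteq> 0" "D \<noteq> 0" "E \<noteq> 0"
    using power_neq_1_of_norm_less_1[OF p, of "Suc n"] t unfolding K_def D_def E_def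
    by (auto simp del: of_nat_Suc)
  have "contrA p q t (Edata p t i) (Edata p t j) y n =
      L * (- E / (D * K)) * ((1 - Ti) / (D * K)) * (K * D * (1 - Q) / E) * Y"
    unfolding contrA_def Edata_def fst_conv etaA_pos[OF zero_less_Suc] etaA_neg[OF zero_less_Suc] ka_def
    by (simp add: K_def D_def E_def Ti_def Q_def Y_def L_def mult.commute del: of_nat_Suc)
  also have "\<dots> = - (1 - Ti) * (1 - Q) / (K * D) * (L * Y)"
    using nz by (simp add: field_simps)
  finally show ?thesis
    by (simp add: qratio_coeff_def K_def D_def Ti_def Q_def Y_def L_def power_mult_distrib del: of_nat_Suc)
qed

lemma contrB_Edata:
  fixes p q t y :: complex
  assumes p: "norm p < 1" and t: "\<forall>k::nat. k > 0 \<longrightarrow> t ^ k \<noteq> 1" and pqt: "p \<noteq> 0" "q \<noteq> 0" "t \<noteq> 0"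
  shows "contrB p q t (Edata p t i) (Edata p t j) y n =
    qratio_coeff p (inverse t) q (Suc n) * ((if i then inverse p else 1) * p * t / q * inverse y) ^ Suc n"
proof -
  define K D E P Ti Q Y L where "K = (of_nat (Suc n) :: complex)" and "D = 1 - p ^ Suc n"
    and "E = 1 - t ^ Suc n" and "P = p ^ Suc n" and "Ti = inverse t ^ Suc n" and "Q = q ^ Suc n"
    and "Y = inverse y ^ Suc n" and "L = (if i then inverse p ^ Suc n else 1)"
  have nz: "K \<noteq> 0" "D \<noteq> 0" "E \<noteq> 0" "P \<noteq> 0" "Ti \<noteq> 0" "Q \<noteq> 0"
    using power_neq_1_of_norm_less_1[OF p, of "Suc n"] t pqt unfolding K_def D_def E_def P_def Ti_def Q_def
    by (auto simp del: of_nat_Suc)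
  have "(q / t * p) ^ Suc n = Q * Ti * P"
    unfolding Q_def Ti_def P_def by (simp only: power_mult_distrib divide_inverse)
  then have "contrB p q t (Edata p t i) (Edata p t j) y n =
      L * (- (1 - Ti) * P / (D * K)) * (E * P / (D * K)) * (K * D / (Q * Ti * P) * (1 - Q) / E) * Y"
    unfolding contrB_def Edata_def snd_conv etaB_pos[OF zero_less_Suc] etaB_neg[OF zero_less_Suc] kb_def
    by (simp only: K_def D_def E_def P_def Ti_def Q_def Y_def L_def power_inverse mult.commute)
  also have "\<dots> = - (1 - Ti) * (1 - Q) / (K * D) * (L * P / (Ti * Q) * Y)"
    using nz by (simp add: field_simps)
  finally show ?thesis
    by (simp add: qratio_coeff_def K_def D_def P_def Ti_def Q_def Y_def L_def power_mult_distrib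
        power_divide power_inverse divide_inverse del: of_nat_Suc)
qed

text \<open>The modes of \<open>\<xi>\<close> are those of \<open>\<eta>\<close> rescaled by powers of \<open>\<gamma>\<close>, so each contraction of
  \<open>F\<close> is the corresponding contraction of \<open>E\<close> at the rescaled point \<open>\<gamma>\<^sup>2 y = t y / q\<close>.\<close>

lemma contrA_Fdata:
  assumes "q \<noteq> 0" "t \<noteq> 0"
  shows "contrA p q t (Fdata p q t i) (Fdata p q t j) y n = contrA p q t (Edata p t i) (Edata p t j) (t / q * y) n"
  unfolding contrA_def Fdata_def Edata_def fst_conv xiA_eq_etaA gam_squared[OF assms, symmetric]
  by (simp add: power_mult_distrib mult_ac del: power_Suc of_nat_Suc)

lemma contrB_Fdata:
  assumes "q \<noteq> 0" "t \<noteq> 0"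
  shows "contrB p q t (Fdata p q t i) (Fdata p q t j) y n = contrB p q t (Edata p t i) (Edata p t j) (t / q * y) n"
  unfolding contrB_def Fdata_def Edata_def snd_conv xiB_eq_etaB gam_squared[OF assms, symmetric]
  by (simp add: power_int_minus power_mult_distrib inverse_mult_distrib power_inverse mult_ac
      del: power_Suc of_nat_Suc)

definition E_contraction :: "complex \<Rightarrow> complex \<Rightarrow> complex \<Rightarrow> bool \<Rightarrow> complex \<Rightarrow> complex" where
  "E_contraction p q t i y = qratio p (inverse t) q ((if i then p else 1) * y) *
     qratio p (inverse t) q ((if i then inverse p else 1) * p * t / q * inverse y)"

lemma contraction_fun_E_contraction:
  fixes p q t c :: complex
  assumes p: "norm p < 1" "p \<noteq> 0" and t: "\<forall>k::nat. k > 0 \<longrightarrow> t ^ k \<noteq> 1"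
    and qt: "q \<noteq> 0" "t \<noteq> 0" and c: "c \<noteq> 0"
    and A: "\<And>y n. contrA p q t V W y n = contrA p q t (Edata p t i) (Edata p t j) (c * y) n"
    and B: "\<And>y n. contrB p q t V W y n = contrB p q t (Edata p t i) (Edata p t j) (c * y) n"
  shows "contraction_fun p q t V W (\<lambda>y. E_contraction p q t i (c * y))"
proof -
  have "contraction_fun p q t V W (\<lambda>y. qratio p (inverse t) q ((if i then p else 1) * c * y) *
      qratio p (inverse t) q ((if i then inverse p else 1) * p * t / q * inverse c * inverse y))"
    by (rule contraction_fun_qratio[OF p])
      (use qt c p in \<open>auto simp: A B contrA_Edata[OF p(1) t] contrB_Edata[OF p(1) t p(2) qt]
        mult.assoc inverse_mult_distrib\<close>)
  then show ?thesis unfolding E_contraction_def by (simp add: mult.assoc inverse_mult_distrib)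
qed

section \<open>The exchange relations\<close>

definition theta_ratio :: "complex \<Rightarrow> complex \<Rightarrow> complex \<Rightarrow> complex \<Rightarrow> complex" where
  "theta_ratio p q t y = theta p y * theta p (q * y / t) / (theta p (y / t) * theta p (q * y))"

lemma divide_rescaled_products:
  fixes A B C D y1 y2 y3 y4 :: complex assumes "y1 * y2 = y3 * y4" "y1 * y2 \<noteq> 0"
  shows "(- A / y1) * (- B / y2) / ((- C / y3) * (- D / y4)) = A * B / (C * D)"
proof -
  have "(- A / y1) * (- B / y2) / ((- C / y3) * (- D / y4)) = A * B / (C * D) * ((y3 * y4) * inverse (y1 * y2))"
    by (simp only: divide_inverse inverse_mult_distrib mult_ac inverse_minus_eq mult_minus_left
        mult_minus_right minus_minus inverse_inverse_eq)
  then show ?thesis using assms by simp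
qed

lemma E_contraction_False:
  fixes p q t y :: complex assumes p: "norm p < 1" "p \<noteq> 0" and nz: "q \<noteq> 0" "t \<noteq> 0" "y \<noteq> 0"
  shows "E_contraction p q t False y = theta_ratio p q t y"
proof -
  have regroup: "(A1 * A2 / (B1 * B2)) * (A3 * A4 / (B3 * B4)) =
      (c * A1 * A4) * (c * A2 * A3) / ((c * B1 * B4) * (c * B2 * B3))"
    if "c \<noteq> 0" for c A1 A2 A3 A4 B1 B2 B3 B4 :: complex
  proof -
    have "(c * A1 * A4) * (c * A2 * A3) / ((c * B1 * B4) * (c * B2 * B3)) =
        (A1 * A2 / (B1 * B2)) * (A3 * A4 / (B3 * B4)) * ((c * inverse c) * (c * inverse c))"
      by (simp only: divide_inverse inverse_mult_distrib mult_ac)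
    then show ?thesis using that by simp
  qed
  have e: "inverse t * q * y = q * y / t" "inverse t * y = y / t"
    "p * t / q * inverse y = p / (q * y / t)" "inverse t * q * (p / (q * y / t)) = p / y"
    "inverse t * (p / (q * y / t)) = p / (q * y)" "q * (p / (q * y / t)) = p / (y / t)"
    using nz by (simp_all add: field_simps)
  have "E_contraction p q t False y =
     (qpoch y p * qpoch (q * y / t) p / (qpoch (y / t) p * qpoch (q * y) p)) *
     (qpoch (p / (q * y / t)) p * qpoch (p / y) p / (qpoch (p / (q * y)) p * qpoch (p / (y / t)) p))"
    unfolding E_contraction_def qratio_def if_False mult_1_left e ..
  also have "\<dots> = theta_ratio p q t y"
    unfolding theta_ratio_def theta_def by (rule regroup[OF qpoch_p_nonzero[OF p]])
  finally show ?thesis .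
qed

lemma theta_ratio_mult_p:
  fixes p q t y :: complex assumes p: "norm p < 1" "p \<noteq> 0" and nz: "q \<noteq> 0" "t \<noteq> 0" "y \<noteq> 0"
  shows "theta_ratio p q t (p * y) = theta_ratio p q t y"
proof -
  have e: "p * (q * y) / t = p * (q * y / t)" "p * y / t = p * (y / t)" "q * (p * y) = p * (q * y)"
    by (simp_all add: field_simps)
  have th: "theta p (p * y) = - theta p y / y" "theta p (p * (q * y / t)) = - theta p (q * y / t) / (q * y / t)"
    "theta p (p * (y / t)) = - theta p (y / t) / (y / t)" "theta p (p * (q * y)) = - theta p (q * y) / (q * y)"
    by (rule theta_mult_p[OF p], use nz in simp)+
  have "theta_ratio p q t (p * y) = (- theta p y / y) * (- theta p (q * y / t) / (q * y / t)) /
      ((- theta p (y / t) / (y / t)) * (- theta p (q * y) / (q * y)))"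
    unfolding theta_ratio_def e th ..
  also have "\<dots> = theta_ratio p q t y" unfolding theta_ratio_def
    by (rule divide_rescaled_products) (use nz in \<open>simp_all add: field_simps\<close>)
  finally show ?thesis .
qed

lemma E_contraction_eq_theta_ratio:
  fixes p q t y :: complex assumes p: "norm p < 1" "p \<noteq> 0" and nz: "q \<noteq> 0" "t \<noteq> 0" "y \<noteq> 0"
  shows "E_contraction p q t i y = theta_ratio p q t y"
proof (cases i)
  case True
  then have "E_contraction p q t i y = E_contraction p q t False (p * y)"
    unfolding E_contraction_def using p nz by (simp add: field_simps)
  also have "\<dots> = theta_ratio p q t y"
    using E_contraction_False[OF p nz(1,2)] theta_ratio_mult_p[OF p nz] p nz by simp
  finally show ?thesis .
qed (use E_contraction_False[OF p nz] in simp)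

lemma theta_ratio_rescale:
  assumes "q \<noteq> 0" "t \<noteq> 0"
  shows "theta_ratio p q t (t / q * y) = theta_ratio p t q y"
  unfolding theta_ratio_def using assms by (simp add: field_simps mult.commute)

lemma theta_inverse_eq:
  fixes p a b :: complex assumes p: "norm p < 1" "p \<noteq> 0" and "a = inverse b" "b \<noteq> 0"
  shows "theta p a = - theta p b / b"
  using theta_inverse[OF p assms(4)] assms(3) by simp

definition theta_ratio_singular :: "complex \<Rightarrow> complex \<Rightarrow> complex \<Rightarrow> complex set" where
  "theta_ratio_singular p q t = geom_orbit p (inverse q) \<union> geom_orbit p t \<union> geom_orbit p (t / q)"

lemma discrete_Cstar_theta_ratio_singular:
  fixes p q t :: complex assumes "norm p < 1" "p \<noteq> 0" "q \<noteq> 0" "t \<noteq> 0"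
  shows "discrete_Cstar (theta_ratio_singular p q t)"
  unfolding theta_ratio_singular_def using assms
  by (intro discrete_Cstar_Un discrete_Cstar_geom_orbit) auto

lemma theta_nonzero_off_theta_ratio_singular:
  fixes p q t u :: complex assumes p: "norm p < 1" "p \<noteq> 0" and nz: "q \<noteq> 0" "t \<noteq> 0"
    and u: "u \<notin> theta_ratio_singular p q t"
  shows "theta p (q * u) \<noteq> 0" "theta p (u / t) \<noteq> 0" "theta p (q * u / t) \<noteq> 0"
proof -
  show "theta p (q * u) \<noteq> 0"
    by (rule theta_scaled_nonzero[OF p nz(1)]) (use u in \<open>simp add: theta_ratio_singular_def\<close>)
  have "theta p (inverse t * u) \<noteq> 0"
    by (rule theta_scaled_nonzero[OF p]) (use u nz in \<open>simp_all add: theta_ratio_singular_def\<close>)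
  then show "theta p (u / t) \<noteq> 0" by (simp add: divide_inverse mult.commute)
  have "theta p (q / t * u) \<noteq> 0"
    by (rule theta_scaled_nonzero[OF p]) (use u nz in \<open>simp_all add: theta_ratio_singular_def\<close>)
  then show "theta p (q * u / t) \<noteq> 0" by (simp add: mult.commute mult.left_commute divide_inverse)
qed

lemma theta_ratio_inverse:
  fixes p q t u :: complex assumes p: "norm p < 1" "p \<noteq> 0" and nz: "q \<noteq> 0" "t \<noteq> 0" "u \<noteq> 0"
    and u: "u \<notin> theta_ratio_singular p q t"
  shows "theta_ratio p q t (inverse u) = gfun p q t u * theta_ratio p q t u"
proof -
  note th = theta_nonzero_off_theta_ratio_singular[OF p nz(1,2) u]
  have "theta p (q * inverse u / t) = - theta p (t * u / q) / (t * u / q)"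
    "theta p (inverse u / t) = - theta p (t * u) / (t * u)"
    "theta p (q * inverse u) = - theta p (u / q) / (u / q)"
    by (rule theta_inverse_eq[OF p]; use nz in \<open>simp add: field_simps\<close>)+
  then have "theta_ratio p q t (inverse u) = (- theta p u / u) * (- theta p (t * u / q) / (t * u / q)) /
     ((- theta p (t * u) / (t * u)) * (- theta p (u / q) / (u / q)))"
    unfolding theta_ratio_def theta_inverse[OF p nz(3)] by simp
  also have "\<dots> = theta p u * theta p (t * u / q) / (theta p (t * u) * theta p (u / q))"
    by (rule divide_rescaled_products) (use nz in \<open>simp_all add: field_simps\<close>)
  also have "\<dots> = gfun p q t u * theta_ratio p q t u"
  proof -
    have cancel: "G1 * G2 * G3 / (H1 * H2 * H3) * (A * H3 / (G2 * G1)) = A * G3 / (H2 * H1)"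
      if "G1 \<noteq> 0" "G2 \<noteq> 0" "H3 \<noteq> 0" for A G1 G2 G3 H1 H2 H3 :: complex
    proof -
      have "G1 * G2 * G3 / (H1 * H2 * H3) * (A * H3 / (G2 * G1)) =
          A * G3 / (H2 * H1) * ((G1 * inverse G1) * (G2 * inverse G2) * (H3 * inverse H3))"
        by (simp only: divide_inverse inverse_mult_distrib mult_ac)
      then show ?thesis using that by simp
    qed
    show ?thesis unfolding gfun_def theta_ratio_def by (rule cancel[symmetric]) (use th in auto)
  qed
  finally show ?thesis .
qed

lemma gfun_swap: "gfun p t q u = inverse (gfun p q t u)"
  unfolding gfun_def by (simp add: mult_ac)

lemma omega'_swap: "omega' p q t = omega p t q"
  unfolding omega_def omega'_def by (simp add: fun_eq_iff mult_ac)

text \<open>After division by \<open>\<omega>\<^sub>p\<close>, the exchange factor becomes this kernel, which is even under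
  \<open>u \<mapsto> 1/u\<close>; this is what makes the normalized N-fold products symmetric.\<close>

definition theta_kernel :: "complex \<Rightarrow> complex \<Rightarrow> complex \<Rightarrow> complex \<Rightarrow> complex" where
  "theta_kernel p q t u = theta p u ^ 4 / (theta p (u / q) * theta p (t * u) * theta p (u / t) * theta p (q * u))"

lemma inverse_omega_mult_theta_ratio:
  fixes p q t x y :: complex assumes nz: "x \<noteq> 0" "q \<noteq> 0" "t \<noteq> 0"
    and th: "theta p (q * (y / x) / t) \<noteq> 0"
  shows "inverse (omega p q t x y) * theta_ratio p q t (y / x) = theta_kernel p q t (y / x)"
proof -
  have cancel: "inverse (B1 * B2 * B3 / A ^ 3) * (A * B3 / (C1 * C2)) = A ^ 4 / (B1 * B2 * C1 * C2)"
    if "B3 \<noteq> 0" for A B1 B2 B3 C1 C2 :: complex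
  proof -
    have "inverse (B1 * B2 * B3 / A ^ 3) * (A * B3 / (C1 * C2)) = A ^ 4 / (B1 * B2 * C1 * C2) * (B3 * inverse B3)"
      by (simp only: divide_inverse inverse_mult_distrib inverse_inverse_eq mult_ac power4_eq_xxxx power3_eq_cube)
    then show ?thesis using that by simp
  qed
  have e: "y / (q * x) = y / x / q" "t * y / x = t * (y / x)" "q * y / (t * x) = q * (y / x) / t"
    using nz by (simp_all add: field_simps)
  show ?thesis unfolding omega_def theta_ratio_def theta_kernel_def e by (rule cancel[OF th])
qed

lemma theta_kernel_inverse:
  fixes p q t u :: complex assumes p: "norm p < 1" "p \<noteq> 0" and nz: "q \<noteq> 0" "t \<noteq> 0" "u \<noteq> 0"
  shows "theta_kernel p q t (inverse u) = theta_kernel p q t u"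
proof -
  have "theta p (inverse u / q) = - theta p (q * u) / (q * u)"
    "theta p (t * inverse u) = - theta p (u / t) / (u / t)"
    "theta p (inverse u / t) = - theta p (t * u) / (t * u)"
    "theta p (q * inverse u) = - theta p (u / q) / (u / q)"
    by (rule theta_inverse_eq[OF p]; use nz in \<open>simp add: field_simps\<close>)+
  then have "theta_kernel p q t (inverse u) = (- theta p u / u) ^ 4 / ((- theta p (q * u) / (q * u)) *
      (- theta p (u / t) / (u / t)) * (- theta p (t * u) / (t * u)) * (- theta p (u / q) / (u / q)))"
    unfolding theta_kernel_def theta_inverse[OF p nz(3)] by simp
  also have "\<dots> = theta p u ^ 4 / (theta p (q * u) * theta p (u / t) * theta p (t * u) * theta p (u / q)) *
      ((q * u) * (u / t) * (t * u) * (u / q) * inverse (u ^ 4))"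
    by (simp only: divide_inverse inverse_mult_distrib mult_ac inverse_minus_eq mult_minus_left
        mult_minus_right minus_minus inverse_inverse_eq power4_eq_xxxx)
  also have "\<dots> = theta_kernel p q t u"
    unfolding theta_kernel_def using nz by (simp add: power4_eq_xxxx mult_ac)
  finally show ?thesis .
qed

section \<open>Symmetry of the normalized N-fold products\<close>

lemma opprod_eq_sign_sum_mult_prod_pairs:
  assumes kernel: "\<And>i j e e'. i < length xs \<Longrightarrow> j < length xs \<Longrightarrow> i \<noteq> j \<Longrightarrow>
              inverse (w (xs ! i) (xs ! j)) * f e e' (xs ! j / xs ! i) = h (xs ! i) (xs ! j)"
  shows "opprod f w xs M =
     (\<Sum>es\<in>{es. length es = length xs \<and> mset (zip es xs) = M}. (- 1) ^ length (filter id es)) *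
     (\<Prod>i<length xs. \<Prod>j\<in>{i<..<length xs}. h (xs ! i) (xs ! j))"
  unfolding opprod_def sum_distrib_right
  by (intro sum.cong refl arg_cong2[where f = times] prod.cong kernel) auto

lemma sum_signs_permute_list:
  fixes xs :: "complex list" and M :: "(bool \<times> complex) multiset"
  assumes s: "s permutes {..<length xs}" and ys: "ys = permute_list s xs"
  shows "(\<Sum>es\<in>{es. length es = length ys \<and> mset (zip es ys) = M}. ((- 1) ^ length (filter id es) :: complex)) =
         (\<Sum>es\<in>{es. length es = length xs \<and> mset (zip es xs) = M}. (- 1) ^ length (filter id es))"
proof -
  have si: "inv s permutes {..<length xs}" using permutes_inv[OF s] .
  have lys: "length ys = length xs" using ys by simp
  have xs: "xs = permute_list (inv s) ys"
  proof -
    have "permute_list (inv s) (permute_list s xs) = permute_list (s \<circ> inv s) xs"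
      using permute_list_compose[OF si, of s] by simp
    then show ?thesis unfolding ys using permutes_inv_o(1)[OF s] by simp
  qed
  show ?thesis
  proof (rule sum.reindex_bij_witness[where j = "permute_list (inv s)" and i = "permute_list s"])
    fix a assume a: "a \<in> {es. length es = length ys \<and> mset (zip es ys) = M}"
    then have la: "length a = length xs" using lys by simp
    show "permute_list s (permute_list (inv s) a) = a"
      using permute_list_compose[of s a "inv s"] s la permutes_inv_o(2)[OF s] by simp
    have "zip (permute_list (inv s) a) xs = permute_list (inv s) (zip a ys)"
      unfolding xs using permute_list_zip[OF si, of a ys] la lys by simp
    then have "mset (zip (permute_list (inv s) a) xs) = mset (zip a ys)"
      using mset_permute_list[of "inv s" "zip a ys"] si la lys by simp
    then show "permute_list (inv s) a \<in> {es. length es = length xs \<and> mset (zip es xs) = M}"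
      using a la by simp
    have "mset (permute_list (inv s) a) = mset a" using mset_permute_list[of "inv s" a] si la by simp
    then show "(- 1) ^ length (filter id (permute_list (inv s) a)) = ((- 1) ^ length (filter id a) :: complex)"
      by (metis mset_filter size_mset)
  next
    fix b assume b: "b \<in> {es. length es = length xs \<and> mset (zip es xs) = M}"
    then have lb: "length b = length xs" by simp
    show "permute_list (inv s) (permute_list s b) = b"
      using permute_list_compose[of "inv s" b s] si lb permutes_inv_o(1)[OF s] by simp
    have "zip (permute_list s b) ys = permute_list s (zip b xs)"
      unfolding ys using permute_list_zip[OF s, of b xs] lb by simp
    then have "mset (zip (permute_list s b) ys) = mset (zip b xs)"
      using mset_permute_list[of s "zip b xs"] s lb by simp
    then show "permute_list s b \<in> {es. length es = length ys \<and> mset (zip es ys) = M}"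
      using b lb lys by simp
  qed
qed

lemma prod_pairs_permutes:
  fixes H :: "nat \<Rightarrow> nat \<Rightarrow> 'a::comm_monoid_mult"
  assumes s: "s permutes {..<N}" and Hs: "\<And>a b. a < N \<Longrightarrow> b < N \<Longrightarrow> a \<noteq> b \<Longrightarrow> H a b = H b a"
  shows "(\<Prod>i<N. \<Prod>j\<in>{i<..<N}. H (s i) (s j)) = (\<Prod>i<N. \<Prod>j\<in>{i<..<N}. H i j)"
proof -
  define P where "P = (SIGMA i:{..<N}. {i<..<N})"
  have img: "a < N \<Longrightarrow> s a < N" for a using permutes_in_image[OF s] by simp
  have imgi: "a < N \<Longrightarrow> inv s a < N" for a using permutes_in_image[OF permutes_inv[OF s]] by simp
  have inj: "s a = s b \<Longrightarrow> a = b" for a b using permutes_inj[OF s] by (simp add: inj_eq)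
  have inji: "inv s a = inv s b \<Longrightarrow> a = b" for a b
    using permutes_inj[OF permutes_inv[OF s]] by (simp add: inj_eq)
  have l: "(\<Prod>i<N. \<Prod>j\<in>{i<..<N}. G i j) = (\<Prod>(i, j)\<in>P. G i j)" for G :: "nat \<Rightarrow> nat \<Rightarrow> 'a"
    unfolding P_def by (rule prod.Sigma) auto
  have "(\<Prod>(i, j)\<in>P. H (s i) (s j)) = (\<Prod>(i, j)\<in>P. H i j)"
  proof (rule prod.reindex_bij_witness[where j = "\<lambda>(a, b). (min (s a) (s b), max (s a) (s b))"
        and i = "\<lambda>(c, d). (min (inv s c) (inv s d), max (inv s c) (inv s d))"])
    fix x assume x: "x \<in> P"
    obtain a b where ab: "x = (a, b)" "a < b" "b < N" using x unfolding P_def by auto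
    have d: "s a \<noteq> s b" using inj ab(2) by (metis less_irrefl)
    show "(case case x of (a, b) \<Rightarrow> (min (s a) (s b), max (s a) (s b)) of
          (c, d) \<Rightarrow> (min (inv s c) (inv s d), max (inv s c) (inv s d))) = x"
      using ab permutes_inverses(2)[OF s, of a] permutes_inverses(2)[OF s, of b]
      by (cases "s a < s b") (auto simp: min_def max_def)
    show "(case x of (a, b) \<Rightarrow> (min (s a) (s b), max (s a) (s b))) \<in> P"
      using ab d img[of a] img[of b] unfolding P_def by (auto simp: min_def max_def)
    show "(case case x of (a, b) \<Rightarrow> (min (s a) (s b), max (s a) (s b)) of (i, j) \<Rightarrow> H i j) =
          (case x of (i, j) \<Rightarrow> H (s i) (s j))"
      using ab d img[of a] img[of b] Hs[of "s a" "s b"] by (auto simp: min_def max_def)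
  next
    fix y assume y: "y \<in> P"
    obtain c d where cd: "y = (c, d)" "c < d" "d < N" using y unfolding P_def by auto
    have dd: "inv s c \<noteq> inv s d" using inji cd(2) by (metis less_irrefl)
    show "(case case y of (c, d) \<Rightarrow> (min (inv s c) (inv s d), max (inv s c) (inv s d)) of
          (a, b) \<Rightarrow> (min (s a) (s b), max (s a) (s b))) = y"
      using cd permutes_inverses(1)[OF s, of c] permutes_inverses(1)[OF s, of d]
      by (cases "inv s c < inv s d") (auto simp: min_def max_def)
    show "(case y of (c, d) \<Rightarrow> (min (inv s c) (inv s d), max (inv s c) (inv s d))) \<in> P"
      using cd dd imgi[of c] imgi[of d] unfolding P_def by (auto simp: min_def max_def)
  qed
  then show ?thesis unfolding l .
qed

lemma opprod_mset_invariant: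
  fixes xs ys :: "complex list" and f :: "bool \<Rightarrow> bool \<Rightarrow> complex \<Rightarrow> complex"
  assumes m: "mset ys = mset xs"
    and G: "\<And>i j. i < length xs \<Longrightarrow> j < length xs \<Longrightarrow> i \<noteq> j \<Longrightarrow> R (xs ! i) (xs ! j)"
    and kernel: "\<And>a b e e'. R a b \<Longrightarrow> inverse (w a b) * f e e' (b / a) = h a b"
    and kernel_sym: "\<And>a b. R a b \<Longrightarrow> R b a \<Longrightarrow> h a b = h b a"
  shows "opprod f w xs = opprod f w ys"
proof
  fix M
  obtain s where s: "s permutes {..<length xs}" and ys: "permute_list s xs = ys"
    using mset_eq_permutation[OF m] by metis
  have lys: "length ys = length xs" using ys by auto
  have ysn: "i < length xs \<Longrightarrow> ys ! i = xs ! s i" for i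
    using permute_list_nth[OF s] ys by auto
  have img: "a < length xs \<Longrightarrow> s a < length xs" for a using permutes_in_image[OF s] by simp
  have inj: "s a = s b \<Longrightarrow> a = b" for a b using permutes_inj[OF s] by (simp add: inj_eq)
  have Gy: "R (ys ! i) (ys ! j)" if "i < length ys" "j < length ys" "i \<noteq> j" for i j
    using that ysn G[of "s i" "s j"] img inj lys by auto
  have ex: "opprod f w xs M =
     (\<Sum>es\<in>{es. length es = length xs \<and> mset (zip es xs) = M}. (- 1) ^ length (filter id es)) *
     (\<Prod>i<length xs. \<Prod>j\<in>{i<..<length xs}. h (xs ! i) (xs ! j))"
    by (rule opprod_eq_sign_sum_mult_prod_pairs) (use kernel G in auto)
  have ey: "opprod f w ys M =
     (\<Sum>es\<in>{es. length es = length ys \<and> mset (zip es ys) = M}. (- 1) ^ length (filter id es)) *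
     (\<Prod>i<length ys. \<Prod>j\<in>{i<..<length ys}. h (ys ! i) (ys ! j))"
    by (rule opprod_eq_sign_sum_mult_prod_pairs) (use kernel Gy in auto)
  have sums: "(\<Sum>es\<in>{es. length es = length ys \<and> mset (zip es ys) = M}. ((- 1) ^ length (filter id es) :: complex)) =
         (\<Sum>es\<in>{es. length es = length xs \<and> mset (zip es xs) = M}. (- 1) ^ length (filter id es))"
    by (rule sum_signs_permute_list[OF s ys[symmetric]])
  have "(\<Prod>i<length ys. \<Prod>j\<in>{i<..<length ys}. h (ys ! i) (ys ! j)) =
        (\<Prod>i<length xs. \<Prod>j\<in>{i<..<length xs}. h (xs ! s i) (xs ! s j))"
    unfolding lys by (intro prod.cong refl) (auto simp: ysn)
  also have "\<dots> = (\<Prod>i<length xs. \<Prod>j\<in>{i<..<length xs}. h (xs ! i) (xs ! j))"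
    by (rule prod_pairs_permutes[OF s, where H = "\<lambda>a b. h (xs ! a) (xs ! b)"]) (use kernel_sym G in auto)
  finally show "opprod f w xs M = opprod f w ys M" unfolding ex ey sums by simp
qed


lemma opprod_theta_ratio_mset_invariant:
  fixes p q t :: complex and xs ys :: "complex list"
  assumes p: "norm p < 1" "p \<noteq> 0" and nz: "q \<noteq> 0" "t \<noteq> 0"
    and f: "\<And>e e' y. y \<noteq> 0 \<Longrightarrow> f e e' y = theta_ratio p q t y"
    and xs: "\<forall>x\<in>set xs. x \<noteq> 0"
      "\<And>i j. i < length xs \<Longrightarrow> j < length xs \<Longrightarrow> i \<noteq> j \<Longrightarrow> xs ! j / xs ! i \<notin> theta_ratio_singular p q t"
    and m: "mset ys = mset xs"
  shows "opprod f (omega p q t) xs = opprod f (omega p q t) ys"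
proof (rule opprod_mset_invariant[OF m, where R = "\<lambda>a b. a \<noteq> 0 \<and> b \<noteq> 0 \<and> b / a \<notin> theta_ratio_singular p q t"
      and h = "\<lambda>a b. theta_kernel p q t (b / a)"])
  show "xs ! i \<noteq> 0 \<and> xs ! j \<noteq> 0 \<and> xs ! j / xs ! i \<notin> theta_ratio_singular p q t"
    if "i < length xs" "j < length xs" "i \<noteq> j" for i j
    using xs that by (auto simp: nth_mem)
  fix a b e e' assume ab: "a \<noteq> 0 \<and> b \<noteq> 0 \<and> b / a \<notin> theta_ratio_singular p q t"
  then show "inverse (omega p q t a b) * f e e' (b / a) = theta_kernel p q t (b / a)"
    using theta_nonzero_off_theta_ratio_singular(3)[OF p nz, of "b / a"] nz
    by (simp add: f inverse_omega_mult_theta_ratio)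
  show "theta_kernel p q t (b / a) = theta_kernel p q t (a / b)"
    using theta_kernel_inverse[OF p nz, of "b / a"] ab by simp
qed

lemma contraction_fun_Edata:
  fixes p q t :: complex
  assumes p: "norm p < 1" "p \<noteq> 0" and t: "\<forall>k::nat. k > 0 \<longrightarrow> t ^ k \<noteq> 1" and nz: "q \<noteq> 0" "t \<noteq> 0"
  shows "contraction_fun p q t (Edata p t i) (Edata p t j) (E_contraction p q t i)"
  using contraction_fun_E_contraction[OF p t nz, of 1] by simp

definition F_contraction :: "complex \<Rightarrow> complex \<Rightarrow> complex \<Rightarrow> bool \<Rightarrow> complex \<Rightarrow> complex" where
  "F_contraction p q t i y = E_contraction p q t i (t / q * y)"

lemma contraction_fun_Fdata:
  fixes p q t :: complex
  assumes p: "norm p < 1" "p \<noteq> 0" and t: "\<forall>k::nat. k > 0 \<longrightarrow> t ^ k \<noteq> 1" and nz: "q \<noteq> 0" "t \<noteq> 0"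
  shows "contraction_fun p q t (Fdata p q t i) (Fdata p q t j) (F_contraction p q t i)"
  unfolding F_contraction_def
  by (rule contraction_fun_E_contraction[OF p t nz]) (use nz in \<open>simp_all add: contrA_Fdata contrB_Fdata\<close>)

lemma F_contraction_eq_theta_ratio:
  fixes p q t y :: complex assumes p: "norm p < 1" "p \<noteq> 0" and nz: "q \<noteq> 0" "t \<noteq> 0" "y \<noteq> 0"
  shows "F_contraction p q t i y = theta_ratio p t q y"
proof -
  have y': "t / q * y \<noteq> 0" using nz by simp
  show ?thesis
    unfolding F_contraction_def E_contraction_eq_theta_ratio[OF p nz(1,2) y'] theta_ratio_rescale[OF nz(1,2)] ..
qed

lemma E_contraction_exchange:
  fixes p q t :: complex assumes p: "norm p < 1" "p \<noteq> 0" and nz: "q \<noteq> 0" "t \<noteq> 0"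
  shows "\<exists>T. discrete_Cstar T \<and> (\<forall>u. u \<noteq> 0 \<and> u \<notin> T \<longrightarrow>
    E_contraction p q t i (inverse u) = gfun p q t u * E_contraction p q t j u)"
  using discrete_Cstar_theta_ratio_singular[OF p nz] theta_ratio_inverse[OF p nz]
  by (intro exI[of _ "theta_ratio_singular p q t"]) (simp add: E_contraction_eq_theta_ratio[OF p nz])

lemma F_contraction_exchange:
  fixes p q t :: complex assumes p: "norm p < 1" "p \<noteq> 0" and nz: "q \<noteq> 0" "t \<noteq> 0"
  shows "\<exists>T. discrete_Cstar T \<and> (\<forall>u. u \<noteq> 0 \<and> u \<notin> T \<longrightarrow>
    F_contraction p q t i (inverse u) = inverse (gfun p q t u) * F_contraction p q t j u)"
  using discrete_Cstar_theta_ratio_singular[OF p nz(2,1)] theta_ratio_inverse[OF p nz(2,1)]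
  by (intro exI[of _ "theta_ratio_singular p t q"])
    (simp add: F_contraction_eq_theta_ratio[OF p nz] gfun_swap[of p t q])

lemma normalized_products_symmetric:
  fixes p q t :: complex assumes p: "norm p < 1" "p \<noteq> 0" and nz: "q \<noteq> 0" "t \<noteq> 0"
  shows "\<exists>T. discrete_Cstar T \<and> (\<forall>xs ys. length xs = N \<and> (\<forall>x\<in>set xs. x \<noteq> 0) \<and>
    (\<forall>i<N. \<forall>j<N. i \<noteq> j \<longrightarrow> xs ! j / xs ! i \<notin> T) \<and> mset ys = mset xs \<longrightarrow>
      opprod (\<lambda>i j. E_contraction p q t i) (omega p q t) xs =
        opprod (\<lambda>i j. E_contraction p q t i) (omega p q t) ys \<and>
      opprod (\<lambda>i j. F_contraction p q t i) (omega' p q t) xs =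
        opprod (\<lambda>i j. F_contraction p q t i) (omega' p q t) ys)"
proof (intro exI[of _ "theta_ratio_singular p q t \<union> theta_ratio_singular p t q"] conjI allI impI)
  show "discrete_Cstar (theta_ratio_singular p q t \<union> theta_ratio_singular p t q)"
    using p nz by (intro discrete_Cstar_Un discrete_Cstar_theta_ratio_singular)
  fix xs ys :: "complex list"
  assume "length xs = N \<and> (\<forall>x\<in>set xs. x \<noteq> 0) \<and> (\<forall>i<N. \<forall>j<N. i \<noteq> j \<longrightarrow>
      xs ! j / xs ! i \<notin> theta_ratio_singular p q t \<union> theta_ratio_singular p t q) \<and> mset ys = mset xs"
  then have xs: "\<forall>x\<in>set xs. x \<noteq> 0" and m: "mset ys = mset xs"
    and sep: "\<And>i j. i < length xs \<Longrightarrow> j < length xs \<Longrightarrow> i \<noteq> j \<Longrightarrow> xs ! j / xs ! i \<notin> theta_ratio_singular p q t"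
      "\<And>i j. i < length xs \<Longrightarrow> j < length xs \<Longrightarrow> i \<noteq> j \<Longrightarrow> xs ! j / xs ! i \<notin> theta_ratio_singular p t q"
    by blast+
  show "opprod (\<lambda>i j. E_contraction p q t i) (omega p q t) xs =
      opprod (\<lambda>i j. E_contraction p q t i) (omega p q t) ys"
    by (rule opprod_theta_ratio_mset_invariant[OF p nz _ xs sep(1) m])
      (rule E_contraction_eq_theta_ratio[OF p nz])
  show "opprod (\<lambda>i j. F_contraction p q t i) (omega' p q t) xs =
      opprod (\<lambda>i j. F_contraction p q t i) (omega' p q t) ys"
    unfolding omega'_swap
    by (rule opprod_theta_ratio_mset_invariant[OF p nz(2,1) _ xs sep(2) m])
      (rule F_contraction_eq_theta_ratio[OF p nz])
qed

theorem proposition3p11: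
  fixes p q t :: complex
  assumes "norm q < 1" and "norm p < 1"
    and "p \<noteq> 0" and "q \<noteq> 0" and "t \<noteq> 0"
    and "\<forall>k::nat. k > 0 \<longrightarrow> t ^ k \<noteq> 1"
  shows "\<exists>fE fF.
     (\<forall>i j. contraction_fun p q t (Edata p t i) (Edata p t j) (fE i j)) \<and>
     (\<forall>i j. contraction_fun p q t (Fdata p q t i) (Fdata p q t j) (fF i j)) \<and>
     (\<forall>i j. \<exists>T. discrete_Cstar T \<and>
        (\<forall>u. u \<noteq> 0 \<and> u \<notin> T \<longrightarrow> fE i j (inverse u) = gfun p q t u * fE j i u)) \<and>
     (\<forall>i j. \<exists>T. discrete_Cstar T \<and>
        (\<forall>u. u \<noteq> 0 \<and> u \<notin> T \<longrightarrow> fF i j (inverse u) = inverse (gfun p q t u) * fF j i u)) \<and>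
     (\<forall>N::nat. N \<ge> 1 \<longrightarrow> (\<exists>T. discrete_Cstar T \<and>
        (\<forall>xs ys. length xs = N \<and> (\<forall>x\<in>set xs. x \<noteq> 0) \<and>
           (\<forall>i<N. \<forall>j<N. i \<noteq> j \<longrightarrow> xs ! j / xs ! i \<notin> T) \<and> mset ys = mset xs \<longrightarrow>
           opprod fE (omega p q t) xs = opprod fE (omega p q t) ys \<and>
           opprod fF (omega' p q t) xs = opprod fF (omega' p q t) ys)))"
proof -
  note p = assms(2,3) and nz = assms(4,5) and t = assms(6)
  show ?thesis
    by (intro exI[of _ "\<lambda>i j. E_contraction p q t i"] exI[of _ "\<lambda>i j. F_contraction p q t i"]
        conjI allI impI)
      (rule contraction_fun_Edata[OF p t nz] contraction_fun_Fdata[OF p t nz]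
        E_contraction_exchange[OF p nz] F_contraction_exchange[OF p nz] normalized_products_symmetric[OF p nz])+
qed

end
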